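(* Let $p,q\in\{y=0\}\subset\mathbb R^2$, $p\ne q$, $L=|p-q|$. For $\epsilon\in(0,1]$ let $\Upsilon_\epsilon\in H^2([0,L];\mathbb R^2)$ be a curve with constant speed $|\partial_x\Upsilon_\epsilon|\equiv\ell(\Upsilon_\epsilon)/L$, $\Upsilon_\epsilon(0)=p$, $\Upsilon_\epsilon(L)=q$, horizontal tangent at $x=0$ and $x=L$, and suppose there is $C>0$ with $$\ell(\Upsilon_\epsilon)-|p-q|\le C\epsilon^{1/2},\qquad \epsilon^{1/2}\int_0^{\ell(\Upsilon_\epsilon)}\kappa_{\gamma_\epsilon}^2\,ds\le C$$ for all $\epsilon$, where $\gamma_\epsilon$ is the arclength reparametrization of $\Upsilon_\epsilon$ and $\kappa_{\gamma_\epsilon}$ its curvature. Then, up to a subsequence, there exists $\Upsilon\in W^{1,\infty}([0,L];\mathbb R^2)$ such that $\Upsilon_\epsilon\to\Upsilon$ in $H^1([0,L];\mathbb R^2)$ and weakly-* in $W^{1,\infty}([0,L];\mathbb R^2)$. Moreover there exists a constant $C'>0$ such that $\|\partial_x\Upsilon_\epsilon-\partial_x\Upsilon\|_{L^2}^2\le C'\epsilon^{1/2}$.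
   Context: $\ell(\Upsilon)=\int_0^L|\partial_x\Upsilon|\,dx$ is the length. *)

theory Defs
  imports "HOL-Analysis.Analysis"
begin

text \<open>f belongs to H^2([a,b]) with classical first derivative f' (f is C^1)
  and weak second derivative f'' in L^2: f' is the primitive of f''.\<close>
definition H2_curve ::
  "real \<Rightarrow> real \<Rightarrow> (real \<Rightarrow> real^2) \<Rightarrow> (real \<Rightarrow> real^2) \<Rightarrow> (real \<Rightarrow> real^2) \<Rightarrow> bool" where
  "H2_curve a b f f' f'' \<longleftrightarrow>
     (\<forall>x\<in>{a..b}. (f has_vector_derivative f' x) (at x within {a..b})) \<and>
     (\<forall>x\<in>{a..b}. (f'' has_integral (f' x - f' a)) {a..x}) \<and>
     (\<lambda>x. norm (f'' x) ^ 2) integrable_on {a..b}"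

definition W1inf_curve ::
  "real \<Rightarrow> real \<Rightarrow> (real \<Rightarrow> real^2) \<Rightarrow> (real \<Rightarrow> real^2) \<Rightarrow> bool" where
  "W1inf_curve a b f f' \<longleftrightarrow>
     bounded (f' ` {a..b}) \<and>
     (\<forall>x\<in>{a..b}. (f' has_integral (f x - f a)) {a..x})"

definition curve_length :: "real \<Rightarrow> (real \<Rightarrow> real^2) \<Rightarrow> real" where
  "curve_length L f = integral {0..L} (\<lambda>x. norm (vector_derivative f (at x within {0..L})))"

text \<open>Arclength reparametrisation of a constant-speed curve on [0,L]:
  gamma(s) = Y(s L / l(Y)), s in [0, l(Y)].\<close>
definition arclength_reparam :: "real \<Rightarrow> (real \<Rightarrow> real^2) \<Rightarrow> real \<Rightarrow> real^2" where
  "arclength_reparam L f = (\<lambda>s. f (s * L / curve_length L f))"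

definition L2sq :: "real \<Rightarrow> (real \<Rightarrow> real^2) \<Rightarrow> real" where
  "L2sq L f = integral {0..L} (\<lambda>x. norm (f x) ^ 2)"

end

theory Submission
  imports Defs
begin

(* Let c = (q - p) / L be the unit direction of the segment from p to q. Since |U'| is constantly
   l / L and U' integrates to q - p over [0, L], expanding the square gives

     integral |U' - c|^2 = (l / L)^2 L - 2 L + L = (l^2 - L^2) / L,

   which the length bound l - L <= C sqrt eps turns into the rate C (2 L + C) sqrt eps / L.
   As U and the segment V x = p + x c start at the same point, |U - V| is bounded uniformly by the
   L^1 norm of U' - c. Uniform bounds together with L^1 convergence give convergence against every
   integrable test function, which is how weak-* convergence in W^{1,infinity} is expressed here.
   Any sequence eps_n -> 0 works. *)

lemma H2_curve_continuous_on_derivative: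
  assumes "H2_curve a b f f' f''"
  shows "continuous_on {a..b} f'"
proof (cases "a \<le> b")
  case True
  have f': "f' x = f' a + integral {a..x} f''" if "x \<in> {a..b}" for x
  proof -
    have "(f'' has_integral (f' x - f' a)) {a..x}"
      using assms that unfolding H2_curve_def by blast
    then show ?thesis
      by (simp add: integral_unique)
  qed
  have "f'' integrable_on {a..b}"
    using assms True unfolding H2_curve_def by auto
  then have "continuous_on {a..b} (\<lambda>x. f' a + integral {a..x} f'')"
    by (intro continuous_intros indefinite_integral_continuous_1)
  then show ?thesis
    by (rule continuous_on_eq) (metis f')
qed simp

lemma square_integral_le:
  fixes f :: "real \<Rightarrow> real"
  assumes f: "f integrable_on {a..b}" and f2: "(\<lambda>x. f x ^ 2) integrable_on {a..b}" and "a \<le> b"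
  shows "(integral {a..b} f) ^ 2 \<le> (b - a) * integral {a..b} (\<lambda>x. f x ^ 2)"
proof (cases "a = b")
  case False
  with \<open>a \<le> b\<close> have "b - a > 0"
    by simp
  define I where "I = integral {a..b} f"
  define S where "S = integral {a..b} (\<lambda>x. f x ^ 2)"
  have "((\<lambda>x. (b - a) ^ 2 * f x ^ 2 - 2 * (b - a) * I * f x + I ^ 2) has_integral
          (b - a) ^ 2 * S - 2 * (b - a) * I * I + (b - a) * I ^ 2) {a..b}"
    unfolding I_def S_def
    by (intro has_integral_add has_integral_diff has_integral_mult_right integrable_integral f f2)
       (use has_integral_const_real[of "I ^ 2" a b] \<open>a \<le> b\<close> in \<open>simp add: I_def\<close>)
  then have "0 \<le> (b - a) ^ 2 * S - 2 * (b - a) * I * I + (b - a) * I ^ 2"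
  proof (rule has_integral_nonneg)
    fix x
    have "(b - a) ^ 2 * f x ^ 2 - 2 * (b - a) * I * f x + I ^ 2 = ((b - a) * f x - I) ^ 2"
      by (simp add: power2_eq_square algebra_simps)
    then show "0 \<le> (b - a) ^ 2 * f x ^ 2 - 2 * (b - a) * I * f x + I ^ 2"
      by simp
  qed
  also have "\<dots> = (b - a) * ((b - a) * S - I ^ 2)"
    by (simp add: algebra_simps power2_eq_square)
  finally show ?thesis
    using \<open>b - a > 0\<close> unfolding I_def S_def by (simp add: zero_le_mult_iff)
qed simp

lemma norm_increment_le_integral_norm_derivative:
  fixes w :: "real \<Rightarrow> 'a::euclidean_space"
  assumes w: "\<And>t. t \<in> {a..b} \<Longrightarrow> (w has_vector_derivative w' t) (at t within {a..b})"
    and int: "(\<lambda>t. norm (w' t)) integrable_on {a..b}" and x: "x \<in> {a..b}"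
  shows "norm (w x - w a) \<le> integral {a..b} (\<lambda>t. norm (w' t))"
proof -
  have sub: "{a..x} \<subseteq> {a..b}"
    using x by auto
  have "(w' has_integral (w x - w a)) {a..x}"
    using x by (intro fundamental_theorem_of_calculus has_vector_derivative_within_subset[OF w sub])
      (auto intro: subsetD[OF sub])
  then have "norm (w x - w a) \<le> integral {a..x} (\<lambda>t. norm (w' t))"
    using integral_norm_bound_integral[OF _ integrable_on_subinterval[OF int sub], of w']
    by (auto simp: integral_unique has_integral_integrable)
  also have "\<dots> \<le> integral {a..b} (\<lambda>t. norm (w' t))"
    by (intro integral_subset_le sub int integrable_on_subinterval[OF int sub]) auto
  finally show ?thesis .
qed

lemma tendsto_zero_if_norm_le_mult_plus:
  fixes a :: "nat \<Rightarrow> 'a::real_normed_vector" and b c :: "nat \<Rightarrow> real"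
  assumes bound: "\<And>n k. norm (a n) \<le> real k * b n + c k"
    and b: "b \<longlonglongrightarrow> 0" and c: "c \<longlonglongrightarrow> 0"
  shows "a \<longlonglongrightarrow> 0"
proof (rule LIMSEQ_I)
  fix r :: real
  assume "0 < r"
  then have r2: "0 < r / 2"
    by simp
  obtain k where k: "c k < r / 2"
    using order_tendstoD(2)[OF c r2] by (metis eventually_sequentially le_refl)
  have "\<forall>\<^sub>F n in sequentially. real k * b n < r / 2"
    using order_tendstoD(2)[OF tendsto_mult_right_zero[OF b, of "real k"] r2] by simp
  then show "\<exists>N. \<forall>n\<ge>N. norm (a n - 0) < r"
    using bound[of _ k] k unfolding eventually_sequentially
    by (metis add_strict_mono field_sum_of_halves le_less_trans diff_zero)
qed

lemma integral_inner_tendsto_zero: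
  fixes \<phi> :: "real \<Rightarrow> 'a::euclidean_space" and g :: "nat \<Rightarrow> real \<Rightarrow> 'a"
  assumes \<phi>: "\<phi> absolutely_integrable_on {a..b}"
    and g_meas: "\<And>n. g n \<in> borel_measurable (lebesgue_on {a..b})"
    and g_bound: "\<And>n x. x \<in> {a..b} \<Longrightarrow> norm (g n x) \<le> M"
    and g_L1: "(\<lambda>n. integral {a..b} (\<lambda>x. norm (g n x))) \<longlonglongrightarrow> 0"
  shows "(\<lambda>n. integral {a..b} (\<lambda>x. \<phi> x \<bullet> g n x)) \<longlonglongrightarrow> 0"
proof -
  (* |phi| |g| <= k |g| + M (max |phi| k - k): for fixed k the first term vanishes as n grows, and
     the second is small uniformly in n for large k, by dominated convergence. *)
  define excess where "excess k x = max (norm (\<phi> x)) (real k) - real k" for k :: nat and x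
  have norm_\<phi>: "(\<lambda>x. norm (\<phi> x)) integrable_on {a..b}"
    using \<phi> absolutely_integrable_on_def by blast
  have excess_int: "excess k integrable_on {a..b}" for k
  proof -
    have "(\<lambda>x. max (norm (\<phi> x)) (real k)) absolutely_integrable_on {a..b}"
      using absolutely_integrable_max_1[OF absolutely_integrable_norm[OF \<phi>]] by (simp add: o_def)
    then show ?thesis
      unfolding excess_def absolutely_integrable_on_def by (intro integrable_diff) auto
  qed
  have excess_tendsto: "(\<lambda>k. integral {a..b} (excess k)) \<longlonglongrightarrow> 0"
  proof -
    have "(\<lambda>k. integral {a..b} (excess k)) \<longlonglongrightarrow> integral {a..b} (\<lambda>x. 0)"
    proof (rule dominated_convergence(2)[OF excess_int norm_\<phi>])
      show "norm (excess k x) \<le> norm (\<phi> x)" for k x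
        by (auto simp: excess_def max_def)
      show "(\<lambda>k. excess k x) \<longlonglongrightarrow> 0" for x
      proof (rule tendsto_eventually)
        obtain N :: nat where "norm (\<phi> x) \<le> real N"
          using real_arch_simple by blast
        then show "\<forall>\<^sub>F k in sequentially. excess k x = 0"
          unfolding eventually_sequentially excess_def by (intro exI[of _ N]) auto
      qed
    qed
    then show ?thesis
      by simp
  qed
  have g_abs: "g n absolutely_integrable_on {a..b}" for n
    by (rule measurable_bounded_by_integrable_imp_absolutely_integrable[OF g_meas _ _ g_bound]) auto
  then have norm_g: "(\<lambda>x. norm (g n x)) integrable_on {a..b}" for n
    using absolutely_integrable_on_def by blast
  have product: "(\<lambda>x. \<phi> x \<bullet> g n x) integrable_on {a..b}" for n
  proof -
    have "bounded (g n ` {a..b})"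
      unfolding bounded_iff using g_bound by (intro exI[of _ M]) auto
    then have "(\<lambda>x. g n x \<bullet> \<phi> x) absolutely_integrable_on {a..b}"
      by (intro absolutely_integrable_bounded_measurable_product[OF _ g_meas _ _ \<phi>])
        (auto simp: bilinear_conv_bounded_bilinear bounded_bilinear_inner)
    then show ?thesis
      by (simp add: absolutely_integrable_on_def inner_commute)
  qed
  show ?thesis
  proof (rule tendsto_zero_if_norm_le_mult_plus)
    show "norm (integral {a..b} (\<lambda>x. \<phi> x \<bullet> g n x))
      \<le> real k * integral {a..b} (\<lambda>x. norm (g n x)) + M * integral {a..b} (excess k)" for n k
    proof -
      have "norm (\<phi> x \<bullet> g n x) \<le> real k * norm (g n x) + M * excess k x" if "x \<in> {a..b}" for x
      proof -
        have "norm (\<phi> x \<bullet> g n x) \<le> norm (\<phi> x) * norm (g n x)"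
          by (simp add: Cauchy_Schwarz_ineq2)
        also have "\<dots> \<le> real k * norm (g n x) + M * excess k x"
        proof (cases "norm (\<phi> x) \<le> real k")
          case True
          then show ?thesis
            by (simp add: excess_def mult_right_mono)
        next
          case False
          then have "(norm (\<phi> x) - real k) * norm (g n x) \<le> (norm (\<phi> x) - real k) * M"
            using g_bound[OF that] by (intro mult_left_mono) auto
          with False show ?thesis
            by (simp add: excess_def algebra_simps)
        qed
        finally show ?thesis .
      qed
      then have "norm (integral {a..b} (\<lambda>x. \<phi> x \<bullet> g n x))
          \<le> integral {a..b} (\<lambda>x. real k * norm (g n x) + M * excess k x)"
        by (intro integral_norm_bound_integral product integrable_add integrable_on_mult_right
            norm_g excess_int)
      then show ?thesis
        by (simp add: integral_add integrable_on_mult_right norm_g excess_int)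
    qed
  qed (use g_L1 tendsto_mult_right_zero[OF excess_tendsto] in auto)
qed

lemma constant_speed_deviation_has_integral:
  fixes u u' :: "real \<Rightarrow> 'a::euclidean_space"
  assumes L: "L = dist p q" "0 < L"
    and u: "\<And>x. x \<in> {0..L} \<Longrightarrow> (u has_vector_derivative u' x) (at x within {0..L})"
    and ends: "u 0 = p" "u L = q"
    and speed: "\<And>x. x \<in> {0..L} \<Longrightarrow> norm (u' x) = s"
  shows "((\<lambda>x. norm (u' x - (q - p) /\<^sub>R L) ^ 2) has_integral (s ^ 2 - 1) * L) {0..L}"
proof -
  define c where "c = (q - p) /\<^sub>R L"
  have norm_qp: "norm (q - p) = L"
    using L by (simp add: dist_norm norm_minus_commute)
  then have norm_c: "norm c = 1"
    using L by (simp add: c_def)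
  have "(u' has_integral (u L - u 0)) {0..L}"
    by (rule fundamental_theorem_of_calculus) (use L(2) u in auto)
  then have "((\<lambda>x. u' x \<bullet> c) has_integral (q - p) \<bullet> c) {0..L}"
    using has_integral_linear[OF _ bounded_linear_inner_left[of c]] by (simp add: ends o_def)
  moreover have "(q - p) \<bullet> c = L"
    using L norm_qp by (simp add: c_def power2_norm_eq_inner[symmetric] power2_eq_square)
  ultimately have inner_c: "((\<lambda>x. u' x \<bullet> c) has_integral L) {0..L}"
    by simp
  have "((\<lambda>x. (s ^ 2 + 1) - 2 * (u' x \<bullet> c)) has_integral (s ^ 2 + 1) * L - 2 * L) {0..L}"
    using has_integral_diff[OF has_integral_const_real[of "s ^ 2 + 1" 0 L]
        has_integral_mult_right[OF inner_c, of 2]] L(2)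
    by (simp add: mult.commute)
  moreover have "(s ^ 2 + 1) - 2 * (u' x \<bullet> c) = norm (u' x - c) ^ 2" if "x \<in> {0..L}" for x
  proof -
    have "norm (u' x - c) ^ 2 = norm (u' x) ^ 2 - 2 * (u' x \<bullet> c) + norm c ^ 2"
      by (simp add: power2_norm_eq_inner inner_diff_left inner_diff_right inner_commute)
    then show ?thesis
      using speed[OF that] norm_c by simp
  qed
  ultimately have "((\<lambda>x. norm (u' x - c) ^ 2) has_integral (s ^ 2 + 1) * L - 2 * L) {0..L}"
    by (rule has_integral_eq[rotated])
  then show ?thesis
    unfolding c_def by (simp add: algebra_simps)
qed

lemma constant_speed_deviation_le:
  fixes u u' :: "real \<Rightarrow> 'a::euclidean_space"
  assumes L: "L = dist p q" "0 < L"
    and u: "\<And>x. x \<in> {0..L} \<Longrightarrow> (u has_vector_derivative u' x) (at x within {0..L})"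
    and ends: "u 0 = p" "u L = q"
    and speed: "\<And>x. x \<in> {0..L} \<Longrightarrow> norm (u' x) = l / L"
    and length_excess: "l - L \<le> C * \<delta>" and "0 \<le> C" "0 \<le> \<delta>" "\<delta> \<le> 1"
  shows "integral {0..L} (\<lambda>x. norm (u' x - (q - p) /\<^sub>R L) ^ 2) \<le> C * (2 * L + C) / L * \<delta>"
    and "\<And>x. x \<in> {0..L} \<Longrightarrow> norm (u' x - (q - p) /\<^sub>R L) \<le> 2 + C / L"
proof -
  have "0 \<le> l / L"
    using speed[of 0] L(2) by (metis atLeastAtMost_iff less_imp_le norm_ge_zero order_refl)
  then have "0 \<le> l"
    using L(2) by (simp add: zero_le_divide_iff)
  have "C * \<delta> \<le> C"
    using \<open>0 \<le> C\<close> \<open>\<delta> \<le> 1\<close> by (simp add: mult_left_le)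
  with length_excess have "l \<le> L + C"
    by linarith
  have "integral {0..L} (\<lambda>x. norm (u' x - (q - p) /\<^sub>R L) ^ 2) = (l - L) * (l + L) / L"
    using integral_unique[OF constant_speed_deviation_has_integral[OF L u ends speed]] L
    by (simp add: field_simps power2_eq_square)
  also have "\<dots> \<le> C * \<delta> * (2 * L + C) / L"
  proof (intro divide_right_mono)
    show "(l - L) * (l + L) \<le> C * \<delta> * (2 * L + C)"
    proof (cases "l \<le> L")
      case True
      then show ?thesis
        using \<open>0 \<le> l\<close> L \<open>0 \<le> C\<close> \<open>0 \<le> \<delta>\<close> by (intro order_trans[OF mult_nonpos_nonneg]) auto
    next
      case False
      then show ?thesis
        using length_excess \<open>l \<le> L + C\<close> L(2) by (intro mult_mono) auto
    qed
  qed (use L(2) in simp)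
  also have "\<dots> = C * (2 * L + C) / L * \<delta>"
    by simp
  finally show "integral {0..L} (\<lambda>x. norm (u' x - (q - p) /\<^sub>R L) ^ 2) \<le> C * (2 * L + C) / L * \<delta>" .
  show "norm (u' x - (q - p) /\<^sub>R L) \<le> 2 + C / L" if "x \<in> {0..L}" for x
  proof -
    have "norm (u' x - (q - p) /\<^sub>R L) \<le> norm (u' x) + norm ((q - p) /\<^sub>R L)"
      by (rule norm_triangle_ineq4)
    also have "\<dots> = l / L + 1"
      using speed[OF that] L by (simp add: dist_norm norm_minus_commute)
    also have "\<dots> \<le> (L + C) / L + 1"
      using \<open>l \<le> L + C\<close> L(2) by (simp add: divide_right_mono)
    also have "\<dots> = 2 + C / L"
      using L(2) by (simp add: add_divide_distrib)
    finally show ?thesis .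
  qed
qed

lemma integral_tendsto_zero_of_uniform_bound:
  fixes f :: "nat \<Rightarrow> real \<Rightarrow> real"
  assumes "a \<le> b" and cont: "\<And>n. continuous_on {a..b} (f n)"
    and bound: "\<And>n x. x \<in> {a..b} \<Longrightarrow> 0 \<le> f n x \<and> f n x \<le> r n" and r: "r \<longlonglongrightarrow> 0"
  shows "(\<lambda>n. integral {a..b} (f n)) \<longlonglongrightarrow> 0"
proof (rule Lim_null_comparison)
  show "\<forall>\<^sub>F n in sequentially. norm (integral {a..b} (f n)) \<le> (b - a) * r n"
  proof (intro always_eventually allI)
    fix n
    have "integral {a..b} (f n) \<le> integral {a..b} (\<lambda>x. r n)"
      using bound by (intro integral_le integrable_continuous_interval cont) auto
    moreover have "0 \<le> integral {a..b} (f n)"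
      using bound by (intro integral_nonneg integrable_continuous_interval cont) auto
    ultimately show "norm (integral {a..b} (f n)) \<le> (b - a) * r n"
      using \<open>a \<le> b\<close> by simp
  qed
  show "(\<lambda>n. (b - a) * r n) \<longlonglongrightarrow> 0"
    using tendsto_mult_right_zero[OF r, of "b - a"] by simp
qed

lemma integral_norm_tendsto_zero_of_L2:
  fixes g :: "nat \<Rightarrow> real \<Rightarrow> 'a::euclidean_space"
  assumes "a \<le> b" and cont: "\<And>n. continuous_on {a..b} (g n)"
    and L2: "(\<lambda>n. integral {a..b} (\<lambda>x. norm (g n x) ^ 2)) \<longlonglongrightarrow> 0"
  shows "(\<lambda>n. integral {a..b} (\<lambda>x. norm (g n x))) \<longlonglongrightarrow> 0"
proof (rule Lim_null_comparison)
  have int: "(\<lambda>x. norm (g n x)) integrable_on {a..b}" for n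
    by (intro integrable_continuous_interval continuous_intros cont)
  have int2: "(\<lambda>x. norm (g n x) ^ 2) integrable_on {a..b}" for n
    by (intro integrable_continuous_interval continuous_intros cont)
  show "\<forall>\<^sub>F n in sequentially. norm (integral {a..b} (\<lambda>x. norm (g n x)))
      \<le> sqrt ((b - a) * integral {a..b} (\<lambda>x. norm (g n x) ^ 2))"
    using square_integral_le[OF int int2 \<open>a \<le> b\<close>] integral_nonneg[OF int]
    by (intro always_eventually allI) (simp add: real_le_rsqrt)
  show "(\<lambda>n. sqrt ((b - a) * integral {a..b} (\<lambda>x. norm (g n x) ^ 2))) \<longlonglongrightarrow> 0"
    using tendsto_real_sqrt[OF tendsto_mult_right_zero[OF L2, of "b - a"]] by simp
qed

lemma L2_and_weak_convergence_of_derivative_convergence: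
  fixes u u' :: "nat \<Rightarrow> real \<Rightarrow> 'a::euclidean_space" and v v' :: "real \<Rightarrow> 'a"
  assumes "a \<le> b"
    and u: "\<And>n x. x \<in> {a..b} \<Longrightarrow> (u n has_vector_derivative u' n x) (at x within {a..b})"
    and v: "\<And>x. x \<in> {a..b} \<Longrightarrow> (v has_vector_derivative v' x) (at x within {a..b})"
    and initial: "\<And>n. u n a = v a"
    and cont: "\<And>n. continuous_on {a..b} (\<lambda>x. u' n x - v' x)"
    and bound: "\<And>n x. x \<in> {a..b} \<Longrightarrow> norm (u' n x - v' x) \<le> M"
    and L2: "(\<lambda>n. integral {a..b} (\<lambda>x. norm (u' n x - v' x) ^ 2)) \<longlonglongrightarrow> 0"
  shows "(\<lambda>n. integral {a..b} (\<lambda>x. norm (u n x - v x) ^ 2)) \<longlonglongrightarrow> 0"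
    and "\<And>\<phi>. \<phi> absolutely_integrable_on {a..b} \<Longrightarrow>
           (\<lambda>n. integral {a..b} (\<lambda>x. \<phi> x \<bullet> (u n x - v x))) \<longlonglongrightarrow> 0"
    and "\<And>\<phi>. \<phi> absolutely_integrable_on {a..b} \<Longrightarrow>
           (\<lambda>n. integral {a..b} (\<lambda>x. \<phi> x \<bullet> (u' n x - v' x))) \<longlonglongrightarrow> 0"
proof -
  define I where "I n = integral {a..b} (\<lambda>x. norm (u' n x - v' x))" for n
  have int: "(\<lambda>x. norm (u' n x - v' x)) integrable_on {a..b}" for n
    by (intro integrable_continuous_interval continuous_intros cont)
  have I_tendsto: "I \<longlonglongrightarrow> 0"
    unfolding I_def[abs_def] by (rule integral_norm_tendsto_zero_of_L2[OF \<open>a \<le> b\<close> cont L2])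
  have I_le: "I n \<le> (b - a) * M" for n
    using integral_le[OF int integrable_on_const[of "{a..b}" M], of n] bound \<open>a \<le> b\<close>
    by (simp add: I_def mult.commute)
  have diff: "((\<lambda>x. u n x - v x) has_vector_derivative u' n x - v' x) (at x within {a..b})"
    if "x \<in> {a..b}" for n x
    by (intro has_vector_derivative_diff u v that)
  have diff_le: "norm (u n x - v x) \<le> I n" if "x \<in> {a..b}" for n x
    using norm_increment_le_integral_norm_derivative[OF diff int that] initial
    by (simp add: I_def)
  have diff_cont: "continuous_on {a..b} (\<lambda>x. u n x - v x)" for n
    by (rule continuous_on_vector_derivative[OF diff])
  have I_square_tendsto: "(\<lambda>n. I n ^ 2) \<longlonglongrightarrow> 0"
    using tendsto_power[OF I_tendsto, of 2] by (simp only: power_zero_numeral)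
  show "(\<lambda>n. integral {a..b} (\<lambda>x. norm (u n x - v x) ^ 2)) \<longlonglongrightarrow> 0"
    using diff_le
    by (intro integral_tendsto_zero_of_uniform_bound[OF \<open>a \<le> b\<close> _ _ I_square_tendsto])
      (auto intro!: continuous_on_power continuous_on_norm diff_cont intro: power_mono)
  show "(\<lambda>n. integral {a..b} (\<lambda>x. \<phi> x \<bullet> (u n x - v x))) \<longlonglongrightarrow> 0"
    if \<phi>: "\<phi> absolutely_integrable_on {a..b}" for \<phi>
  proof (rule integral_inner_tendsto_zero[OF \<phi>])
    show "(\<lambda>x. u n x - v x) \<in> borel_measurable (lebesgue_on {a..b})" for n
      by (intro continuous_imp_measurable_on_sets_lebesgue diff_cont) auto
    show "norm (u n x - v x) \<le> (b - a) * M" if "x \<in> {a..b}" for n x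
      using diff_le[OF that] I_le by (rule order_trans)
    show "(\<lambda>n. integral {a..b} (\<lambda>x. norm (u n x - v x))) \<longlonglongrightarrow> 0"
      using diff_le by (intro integral_tendsto_zero_of_uniform_bound[OF \<open>a \<le> b\<close> _ _ I_tendsto])
        (auto intro!: continuous_on_norm diff_cont)
  qed
  show "(\<lambda>n. integral {a..b} (\<lambda>x. \<phi> x \<bullet> (u' n x - v' x))) \<longlonglongrightarrow> 0"
    if \<phi>: "\<phi> absolutely_integrable_on {a..b}" for \<phi>
  proof (rule integral_inner_tendsto_zero[OF \<phi> _ bound])
    show "(\<lambda>x. u' n x - v' x) \<in> borel_measurable (lebesgue_on {a..b})" for n
      by (intro continuous_imp_measurable_on_sets_lebesgue cont) auto
    show "(\<lambda>n. integral {a..b} (\<lambda>x. norm (u' n x - v' x))) \<longlonglongrightarrow> 0"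
      using I_tendsto unfolding I_def[abs_def] .
  qed
qed

lemma W1inf_curve_affine: "W1inf_curve a b (\<lambda>x. p + x *\<^sub>R c) (\<lambda>_. c)"
  unfolding W1inf_curve_def
proof (intro conjI ballI)
  show "bounded ((\<lambda>_. c) ` {a..b})"
    by (rule bounded_subset[of "{c}"]) auto
  show "((\<lambda>_. c) has_integral (p + x *\<^sub>R c) - (p + a *\<^sub>R c)) {a..x}" if "x \<in> {a..b}" for x
    using has_integral_const_real[of c a x] that by (simp add: algebra_simps)
qed

lemma L2sq_nonneg: "0 \<le> L2sq L f"
  unfolding L2sq_def
  by (cases "(\<lambda>x. norm (f x) ^ 2) integrable_on {0..L}")
    (simp_all add: integral_nonneg not_integrable_integral)

theorem lemma4p3:
  fixes p q :: "real^2"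
    and U U' U'' :: "real \<Rightarrow> real \<Rightarrow> real^2"
    and C L :: real
  assumes "p $ 2 = 0" and "q $ 2 = 0" and "p \<noteq> q"
    and "L = dist p q"
    and "C > 0"
    and H2: "\<And>\<epsilon>. \<epsilon> \<in> {0<..1} \<Longrightarrow> H2_curve 0 L (U \<epsilon>) (U' \<epsilon>) (U'' \<epsilon>)"
    and speed: "\<And>\<epsilon> x. \<epsilon> \<in> {0<..1} \<Longrightarrow> x \<in> {0..L} \<Longrightarrow>
                 norm (U' \<epsilon> x) = curve_length L (U \<epsilon>) / L"
    and start: "\<And>\<epsilon>. \<epsilon> \<in> {0<..1} \<Longrightarrow> U \<epsilon> 0 = p"
    and finish: "\<And>\<epsilon>. \<epsilon> \<in> {0<..1} \<Longrightarrow> U \<epsilon> L = q"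
    and horiz0: "\<And>\<epsilon>. \<epsilon> \<in> {0<..1} \<Longrightarrow> U' \<epsilon> 0 $ 2 = 0"
    and horizL: "\<And>\<epsilon>. \<epsilon> \<in> {0<..1} \<Longrightarrow> U' \<epsilon> L $ 2 = 0"
    and len: "\<And>\<epsilon>. \<epsilon> \<in> {0<..1} \<Longrightarrow> curve_length L (U \<epsilon>) - dist p q \<le> C * sqrt \<epsilon>"
    and curv: "\<And>\<epsilon>. \<epsilon> \<in> {0<..1} \<Longrightarrow>
       \<exists>g' g''. H2_curve 0 (curve_length L (U \<epsilon>)) (arclength_reparam L (U \<epsilon>)) g' g'' \<and>
         sqrt \<epsilon> * integral {0..curve_length L (U \<epsilon>)} (\<lambda>s. norm (g'' s) ^ 2) \<le> C"
  shows "\<exists>e :: nat \<Rightarrow> real. \<exists>V V' :: real \<Rightarrow> real^2.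
           (\<forall>n. e n \<in> {0<..1}) \<and> e \<longlonglongrightarrow> 0 \<and>
           W1inf_curve 0 L V V' \<and>
           (\<lambda>n. L2sq L (\<lambda>x. U (e n) x - V x) + L2sq L (\<lambda>x. U' (e n) x - V' x)) \<longlonglongrightarrow> 0 \<and>
           (\<forall>\<phi> :: real \<Rightarrow> real^2. \<phi> absolutely_integrable_on {0..L} \<longrightarrow>
              (\<lambda>n. integral {0..L} (\<lambda>x. \<phi> x \<bullet> (U (e n) x - V x))) \<longlonglongrightarrow> 0 \<and>
              (\<lambda>n. integral {0..L} (\<lambda>x. \<phi> x \<bullet> (U' (e n) x - V' x))) \<longlonglongrightarrow> 0) \<and>
           (\<exists>C'>0. \<forall>n. L2sq L (\<lambda>x. U' (e n) x - V' x) \<le> C' * sqrt (e n))"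
proof -
  have L: "L = dist p q" "0 < L"
    using assms(3,4) by simp_all
  define c where "c = (q - p) /\<^sub>R L"
  define V where "V = (\<lambda>x. p + x *\<^sub>R c)"
  define e where "e n = 1 / real (Suc n)" for n
  define K where "K = C * (2 * L + C) / L"
  have e: "e n \<in> {0<..1}" and sqrt_e: "0 \<le> sqrt (e n)" "sqrt (e n) \<le> 1" for n
    by (simp_all add: e_def)
  have "e \<longlonglongrightarrow> 0"
    using LIMSEQ_inverse_real_of_nat by (simp add: e_def[abs_def] inverse_eq_divide)
  have "K > 0"
    unfolding K_def using L(2) \<open>C > 0\<close> by (intro divide_pos_pos mult_pos_pos) auto
  have U: "(U (e n) has_vector_derivative U' (e n) x) (at x within {0..L})" if "x \<in> {0..L}" for n x
    using H2[OF e] that unfolding H2_curve_def by blast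
  have U'_cont: "continuous_on {0..L} (\<lambda>x. U' (e n) x - c)" for n
    using H2_curve_continuous_on_derivative[OF H2[OF e]] by (intro continuous_intros)
  have V: "(V has_vector_derivative c) (at x within {0..L})" for x
    unfolding V_def by (auto intro!: derivative_eq_intros)
  have initial: "U (e n) 0 = V 0" for n
    using start[OF e] by (simp add: V_def)
  note deviation = constant_speed_deviation_le[OF L U start[OF e] finish[OF e] speed[OF e]
      len[OF e, folded L(1)] less_imp_le[OF \<open>C > 0\<close>] sqrt_e, folded c_def K_def L2sq_def]
  have derivative_L2: "(\<lambda>n. L2sq L (\<lambda>x. U' (e n) x - c)) \<longlonglongrightarrow> 0"
  proof (rule Lim_null_comparison)
    show "\<forall>\<^sub>F n in sequentially. norm (L2sq L (\<lambda>x. U' (e n) x - c)) \<le> K * sqrt (e n)"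
      using deviation(1) L2sq_nonneg by (intro always_eventually allI) simp
    show "(\<lambda>n. K * sqrt (e n)) \<longlonglongrightarrow> 0"
      using tendsto_mult_right_zero[OF tendsto_real_sqrt[OF \<open>e \<longlonglongrightarrow> 0\<close>, unfolded real_sqrt_zero]] .
  qed
  note convergence = L2_and_weak_convergence_of_derivative_convergence[OF _ U V initial U'_cont
      deviation(2) derivative_L2[unfolded L2sq_def]]
  show ?thesis
  proof (rule exI[of _ e], rule exI[of _ V], rule exI[of _ "\<lambda>_. c"], intro conjI allI impI)
    show "(\<lambda>n. L2sq L (\<lambda>x. U (e n) x - V x) + L2sq L (\<lambda>x. U' (e n) x - c)) \<longlonglongrightarrow> 0"
      using tendsto_add_zero[OF convergence(1) derivative_L2] L(2) by (simp add: L2sq_def)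
    show "W1inf_curve 0 L V (\<lambda>_. c)"
      unfolding V_def by (rule W1inf_curve_affine)
  qed (use e \<open>e \<longlonglongrightarrow> 0\<close> \<open>K > 0\<close> deviation(1) convergence(2,3) L(2) in auto)
qed

end
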